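(* Let $f:[1,\infty)\to\mathbb{R}$ be defined by $f(1)=0$ and $$f(x)=\frac{x+1}{2}\log\Big(\frac{x+1}{2}\Big)-\frac{x-1}{2}\log\Big(\frac{x-1}{2}\Big),\qquad x\in(1,\infty).$$ Then: (i) $f$ is continuous, strictly monotone increasing and concave, with $\lim_{x\to1}f'(x)=\infty$; (ii) there exists $C\in(0,1]$ such that $f(x)\le C\sqrt{x^2-1}$ for all $x\in[1,\infty)$; (iii) $f(x)\ge\log(x)$ for all $x\in[1,\infty)$. *)

theory Defs
  imports "HOL-Analysis.Analysis"
begin

definition f_lem :: "real \<Rightarrow> real" where
  "f_lem x = (if x = 1 then 0 else
      (x + 1) / 2 * ln ((x + 1) / 2) - (x - 1) / 2 * ln ((x - 1) / 2))"

end

theory Submission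
  imports Defs "HOL-Real_Asymp.Real_Asymp"
begin

text \<open>With g y = y ln y we have f x = g ((x + 1) / 2) - g ((x - 1) / 2) (this also holds at x = 1
  because 0 * ln 0 = 0), so f' x = ln ((x + 1) / (x - 1)) / 2 on (1, oo): positive, decreasing,
  and unbounded at 1. This gives monotonicity and concavity on (1, oo); concavity passes to
  the closure [1, oo) by continuity. Writing x = 2 b + 1, f x = ln (1 + b) + b ln (1 + 1 / b);
  both bounds follow by estimating the two logarithms, with ln y \<le> y - 1 from below and
  ln (1 + u) \<le> sqrt u from above (the latter from 1 + s^2 \<le> exp s), which yields C = 1.\<close>

lemma convex_on_closure:
  fixes f :: "'a::real_normed_vector \<Rightarrow> real"
  assumes convex: "convex_on S f" and cont: "continuous_on (closure S) f"
  shows "convex_on (closure S) f"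
proof -
  have "convex (closure S)"
    using convex convex_closure convex_on_imp_convex by blast
  moreover have "f (u *\<^sub>R x + v *\<^sub>R y) \<le> u * f x + v * f y"
    if "x \<in> closure S" "y \<in> closure S" "u \<ge> 0" "v \<ge> 0" "u + v = 1" for x y u v
  proof -
    define g where "g p = u * f (fst p) + v * f (snd p) - f (u *\<^sub>R fst p + v *\<^sub>R snd p)" for p
    have "continuous_on (closure (S \<times> S)) g"
      unfolding g_def closure_Times
      using cont \<open>convex (closure S)\<close>
      by (intro continuous_intros continuous_on_compose2[OF cont])
         (auto simp: convex_def that)
    moreover have "g p \<ge> 0" if "p \<in> S \<times> S" for p
      using convex that \<open>u \<ge> 0\<close> \<open>v \<ge> 0\<close> \<open>u + v = 1\<close>
      by (auto simp: g_def convex_on_def)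
    ultimately have "g (x, y) \<ge> 0"
      using continuous_ge_on_closure[of "S \<times> S" g "(x, y)" 0] that
      by (simp add: closure_Times)
    then show ?thesis
      by (simp add: g_def)
  qed
  ultimately show ?thesis
    by (simp add: convex_on_def)
qed

lemma concave_on_closure:
  fixes f :: "'a::real_normed_vector \<Rightarrow> real"
  assumes "concave_on S f" and "continuous_on (closure S) f"
  shows "concave_on (closure S) f"
  using assms unfolding concave_on_def
  by (intro convex_on_closure continuous_intros)

lemma one_plus_square_le_exp:
  fixes s :: real
  assumes "0 \<le> s"
  shows "1 + s\<^sup>2 \<le> exp s"
proof -
  have "(1 + s/2 + (s/2)\<^sup>2/2)\<^sup>2 - (1 + s\<^sup>2) = s * ((s - 2)\<^sup>2 + 4) / 8 + s ^ 4 / 64"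
    by (simp add: power2_eq_square power4_eq_xxxx field_simps)
  moreover have "s * ((s - 2)\<^sup>2 + 4) / 8 \<ge> 0" "s ^ 4 / 64 \<ge> 0"
    using assms by simp_all
  ultimately have "1 + s\<^sup>2 \<le> (1 + s/2 + (s/2)\<^sup>2/2)\<^sup>2"
    by linarith
  also have "\<dots> \<le> (exp (s/2))\<^sup>2"
    using exp_lower_Taylor_quadratic[of "s/2"] assms by (intro power_mono) auto
  also have "\<dots> = exp s"
    by (simp flip: exp_double)
  finally show ?thesis .
qed

lemma ln_add_one_le_sqrt:
  fixes u :: real
  assumes "0 \<le> u"
  shows "ln (1 + u) \<le> sqrt u"
proof -
  have "1 + u \<le> exp (sqrt u)"
    using one_plus_square_le_exp[of "sqrt u"] assms by simp
  then have "ln (1 + u) \<le> ln (exp (sqrt u))"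
    using assms by (subst ln_le_cancel_iff) auto
  then show ?thesis
    by simp
qed

lemma one_minus_inverse_le_ln:
  fixes x :: real
  assumes "0 < x"
  shows "1 - 1 / x \<le> ln x"
  using ln_le_minus_one[of "1 / x"] assms by (simp add: ln_div)

lemma f_lem_eq: "f_lem x = (x + 1) / 2 * ln ((x + 1) / 2) - (x - 1) / 2 * ln ((x - 1) / 2)"
  by (simp add: f_lem_def)

lemma f_lem_double_plus_one:
  assumes "0 < b"
  shows "f_lem (2 * b + 1) = ln (1 + b) + b * ln (1 + 1 / b)"
proof -
  have "ln (1 + 1 / b) = ln (1 + b) - ln b"
    using assms by (simp add: field_simps ln_div)
  moreover have "(2 * b + 1 + 1) / 2 = 1 + b" "(2 * b + 1 - 1) / 2 = b"
    by simp_all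
  ultimately show ?thesis
    by (simp only: f_lem_eq) (simp add: algebra_simps)
qed

lemma has_real_derivative_f_lem:
  assumes "1 < x"
  shows "(f_lem has_real_derivative ln ((x + 1) / (x - 1)) / 2) (at x)"
proof -
  have "x + 1 > 0" "x - 1 > 0"
    using assms by simp_all
  then have "(f_lem has_real_derivative (ln ((x + 1) / 2) - ln ((x - 1) / 2)) / 2) (at x)"
    unfolding f_lem_eq[abs_def]
    by (auto intro!: derivative_eq_intros simp: divide_simps) (simp add: algebra_simps)
  also have "ln ((x + 1) / 2) - ln ((x - 1) / 2) = ln ((x + 1) / (x - 1))"
    using \<open>x + 1 > 0\<close> \<open>x - 1 > 0\<close> by (simp add: ln_div)
  finally show ?thesis .
qed

lemma f_lem_deriv_antimono:
  fixes u v :: real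
  assumes "1 < u" "u \<le> v"
  shows "ln ((v + 1) / (v - 1)) / 2 \<le> ln ((u + 1) / (u - 1)) / 2"
proof -
  have "(v + 1) / (v - 1) \<le> (u + 1) / (u - 1)"
    using assms by (simp add: field_simps)
  then show ?thesis
    using assms by simp
qed

lemma continuous_on_f_lem: "continuous_on {1..} f_lem"
proof -
  have "(f_lem \<longlongrightarrow> 0) (at_right 1)"
    unfolding f_lem_eq[abs_def] by real_asymp
  then have "continuous (at 1 within {1..}) f_lem"
    by (simp add: continuous_within at_within_Ici_at_right f_lem_def)
  moreover have "continuous (at x within {1..}) f_lem" if "1 < x" for x
    using has_real_derivative_f_lem[OF that]
    by (rule continuous_at_imp_continuous_at_within[OF DERIV_isCont])
  ultimately show ?thesis
    unfolding continuous_on_eq_continuous_within by (metis atLeast_iff order_le_less)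
qed

lemma strict_mono_on_f_lem: "strict_mono_on {1..} f_lem"
proof (rule strict_mono_onI)
  fix x y :: real
  assume "x \<in> {1..}" "y \<in> {1..}" "x < y"
  show "f_lem x < f_lem y"
  proof (rule DERIV_pos_imp_increasing_open[OF \<open>x < y\<close>])
    show "\<exists>d. (f_lem has_real_derivative d) (at z) \<and> 0 < d" if "x < z" "z < y" for z
      using that \<open>x \<in> {1..}\<close> has_real_derivative_f_lem[of z] by force
    show "continuous_on {x..y} f_lem"
      using \<open>x \<in> {1..}\<close> by (intro continuous_on_subset[OF continuous_on_f_lem]) auto
  qed
qed

lemma concave_on_f_lem: "concave_on {1..} f_lem"
proof -
  have "convex_on {1<..} (\<lambda>x. - f_lem x)"
  proof (rule convex_on_realI[where f' = "\<lambda>x. - (ln ((x + 1) / (x - 1)) / 2)"])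
    show "((\<lambda>x. - f_lem x) has_real_derivative - (ln ((x + 1) / (x - 1)) / 2)) (at x)"
      if "x \<in> {1<..}" for x
      using that by (auto intro: DERIV_minus has_real_derivative_f_lem)
    show "- (ln ((x + 1) / (x - 1)) / 2) \<le> - (ln ((y + 1) / (y - 1)) / 2)"
      if "x \<in> {1<..}" "x \<le> y" for x y :: real
      using that f_lem_deriv_antimono by simp
  qed simp
  then have "concave_on {1<..} f_lem"
    by (simp add: concave_on_def)
  then show ?thesis
    using concave_on_closure[of "{1<..}" f_lem] continuous_on_f_lem by simp
qed

lemma deriv_f_lem_at_right_1: "filterlim (deriv f_lem) at_top (at_right 1)"
proof (rule filterlim_mono_eventually[OF _ order_refl order_refl])
  show "filterlim (\<lambda>x::real. ln ((x + 1) / (x - 1)) / 2) at_top (at_right 1)"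
    by real_asymp
  show "\<forall>\<^sub>F x in at_right 1. ln ((x + 1) / (x - 1)) / 2 = deriv f_lem x"
    using eventually_at_right_less[of "1::real"]
    by eventually_elim (metis DERIV_imp_deriv has_real_derivative_f_lem)
qed

lemma f_lem_le_sqrt:
  assumes "1 \<le> x"
  shows "f_lem x \<le> sqrt (x\<^sup>2 - 1)"
proof (cases "x = 1")
  case True
  then show ?thesis
    by (simp add: f_lem_def)
next
  case False
  define b where "b = (x - 1) / 2"
  have "0 < b" and x: "x = 2 * b + 1"
    using assms False by (simp_all add: b_def field_simps)
  have "ln (1 + b) \<le> sqrt b"
    using \<open>0 < b\<close> by (simp add: ln_add_one_le_sqrt)
  also have "\<dots> \<le> sqrt b * sqrt (1 + b)"
    using \<open>0 < b\<close> by (simp add: mult_le_cancel_left1)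
  finally have first: "ln (1 + b) \<le> sqrt b * sqrt (1 + b)" .
  have "b * ln (1 + 1 / b) \<le> b * sqrt (1 / b)"
    using \<open>0 < b\<close> by (simp add: ln_add_one_le_sqrt)
  also have "\<dots> = sqrt b"
    using \<open>0 < b\<close> real_div_sqrt[of b] by (simp add: real_sqrt_divide)
  also have "\<dots> \<le> sqrt b * sqrt (1 + b)"
    using \<open>0 < b\<close> by (simp add: mult_le_cancel_left1)
  finally have second: "b * ln (1 + 1 / b) \<le> sqrt b * sqrt (1 + b)" .
  have "x\<^sup>2 - 1 = 2\<^sup>2 * (b * (1 + b))"
    by (simp add: x power2_eq_square algebra_simps)
  then have "sqrt (x\<^sup>2 - 1) = 2 * (sqrt b * sqrt (1 + b))"
    by (simp add: real_sqrt_mult)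
  then show ?thesis
    using f_lem_double_plus_one[OF \<open>0 < b\<close>] first second x by simp
qed

lemma ln_le_f_lem:
  assumes "1 \<le> x"
  shows "ln x \<le> f_lem x"
proof (cases "x = 1")
  case True
  then show ?thesis
    by (simp add: f_lem_def)
next
  case False
  define b where "b = (x - 1) / 2"
  have "0 < b" and x: "x = 2 * b + 1"
    using assms False by (simp_all add: b_def field_simps)
  have "ln (2 * b + 1) - ln (1 + b) = ln ((2 * b + 1) / (1 + b))"
    using \<open>0 < b\<close> by (simp add: ln_div)
  also have "\<dots> \<le> (2 * b + 1) / (1 + b) - 1"
    using \<open>0 < b\<close> by (intro ln_le_minus_one) simp
  also have "\<dots> = b * (1 - 1 / (1 + 1 / b))"
    using \<open>0 < b\<close> by (simp add: field_simps)
  also have "\<dots> \<le> b * ln (1 + 1 / b)"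
    using \<open>0 < b\<close> by (intro mult_left_mono one_minus_inverse_le_ln) (auto intro: add_pos_pos)
  finally show ?thesis
    using f_lem_double_plus_one[OF \<open>0 < b\<close>] x by simp
qed

theorem lemma1p7:
  shows "(continuous_on {1..} f_lem \<and> strict_mono_on {1..} f_lem \<and> concave_on {1..} f_lem
          \<and> (\<forall>x>1. f_lem differentiable (at x))
          \<and> filterlim (deriv f_lem) at_top (at_right 1))
       \<and> (\<exists>C::real. 0 < C \<and> C \<le> 1 \<and> (\<forall>x\<ge>1. f_lem x \<le> C * sqrt (x\<^sup>2 - 1)))
       \<and> (\<forall>x\<ge>1. f_lem x \<ge> ln x)"
proof (intro conjI)
  show "\<forall>x>1. f_lem differentiable (at x)"
    using has_real_derivative_f_lem real_differentiable_def by blast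
  show "\<exists>C::real. 0 < C \<and> C \<le> 1 \<and> (\<forall>x\<ge>1. f_lem x \<le> C * sqrt (x\<^sup>2 - 1))"
    using f_lem_le_sqrt by (intro exI[of _ 1]) simp
qed (use continuous_on_f_lem strict_mono_on_f_lem concave_on_f_lem deriv_f_lem_at_right_1
      ln_le_f_lem in auto)

end
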